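(* Let $I,J$ be positive integers, let $a_1,\ldots,a_J\in[0,\infty)^I$ be nonzero vectors, and consider the statistical model in which, for a parameter $\theta=(\theta_1,\ldots,\theta_I)\in(0,\infty)^I$, the observed counts $n_1,\ldots,n_J$ are independent with $n_j\sim\mathrm{Poisson}(\theta\cdot a_j)$, so that the joint probability mass function is $$f_\theta(n_1,\ldots,n_J)=\prod_{j=1}^J\frac{(\theta\cdot a_j)^{n_j}e^{-\theta\cdot a_j}}{n_j!}.$$ Then for any collapsing $\mathcal{C}=\{C_1,\ldots,C_K\}$ of the read types $s_1,\ldots,s_J$, the vector of collapsed counts $n_{\mathcal{C}}=(n_{C_1},\ldots,n_{C_K})$, where $n_{C_k}=\sum_{s_j\in C_k}n_j$, is a sufficient statistic for $\theta$.
   Context: Read type $s_j$ has sampling rate vector $a_j=(a_{1,j},\ldots,a_{I,j})$, and $\theta\cdot a_j=\sum_{i=1}^I\theta_i a_{i,j}$. A collapsing of $s_1,\ldots,s_J$ is a partition $\{C_1,\ldots,C_K\}$ of $\{s_1,\ldots,s_J\}$ into nonempty disjoint categories such that whenever $s_{j_1},s_{j_2}$ lie in the same category, $a_{j_1}=c\,a_{j_2}$ for some real $c>0$. *)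

theory Defs
  imports "HOL-Analysis.Analysis"
begin

definition rate :: "nat \<Rightarrow> (nat \<Rightarrow> nat \<Rightarrow> real) \<Rightarrow> (nat \<Rightarrow> real) \<Rightarrow> nat \<Rightarrow> real" where
  "rate I a \<theta> j = (\<Sum>i<I. \<theta> i * a i j)"

definition poisson_model :: "nat \<Rightarrow> nat \<Rightarrow> (nat \<Rightarrow> nat \<Rightarrow> real) \<Rightarrow> (nat \<Rightarrow> real) \<Rightarrow> (nat \<Rightarrow> nat) \<Rightarrow> real" where
  "poisson_model I J a \<theta> n =
     (\<Prod>j<J. rate I a \<theta> j ^ n j * exp (- rate I a \<theta> j) / fact (n j))"

definition count_space_J :: "nat \<Rightarrow> (nat \<Rightarrow> nat) set" where
  "count_space_J J = {n. \<forall>j\<ge>J. n j = 0}"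

definition param_space :: "nat \<Rightarrow> (nat \<Rightarrow> real) set" where
  "param_space I = {\<theta>. (\<forall>i<I. 0 < \<theta> i) \<and> (\<forall>i\<ge>I. \<theta> i = 0)}"

text \<open>Sufficiency for a discrete model with pmfs f theta on a countable sample space X:
  the conditional distribution of the data given T(data) does not depend on theta, i.e.
  there is h with P_theta(X = x | T = T x) = h x for every theta with P_theta(T = T x) > 0.\<close>
definition sufficient_statistic ::
  "('p \<Rightarrow> 'x \<Rightarrow> real) \<Rightarrow> 'p set \<Rightarrow> 'x set \<Rightarrow> ('x \<Rightarrow> 'y) \<Rightarrow> bool" where
  "sufficient_statistic f \<Theta> X T \<longleftrightarrow>
     (\<exists>h. \<forall>\<theta>\<in>\<Theta>. \<forall>x\<in>X.
        (\<Sum>\<^sub>\<infinity>y\<in>{y\<in>X. T y = T x}. f \<theta> y) > 0 \<longrightarrow>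
        f \<theta> x / (\<Sum>\<^sub>\<infinity>y\<in>{y\<in>X. T y = T x}. f \<theta> y) = h x)"

definition collapsing :: "nat \<Rightarrow> nat \<Rightarrow> (nat \<Rightarrow> nat \<Rightarrow> real) \<Rightarrow> nat set set \<Rightarrow> bool" where
  "collapsing I J a \<C> \<longleftrightarrow>
     \<Union>\<C> = {..<J} \<and> (\<forall>C\<in>\<C>. C \<noteq> {}) \<and>
     (\<forall>C\<in>\<C>. \<forall>D\<in>\<C>. C \<noteq> D \<longrightarrow> C \<inter> D = {}) \<and>
     (\<forall>C\<in>\<C>. \<forall>j1\<in>C. \<forall>j2\<in>C. \<exists>c::real. c > 0 \<and> (\<forall>i<I. a i j1 = c * a i j2))"

definition collapsed_counts :: "nat set set \<Rightarrow> (nat \<Rightarrow> nat) \<Rightarrow> nat set \<Rightarrow> nat" where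
  "collapsed_counts \<C> n = (\<lambda>C. if C \<in> \<C> then (\<Sum>j\<in>C. n j) else 0)"

end

theory Submission
  imports Defs
begin

text \<open>Within a category all rates are positive multiples of the rate of one representative
  type, so the joint pmf factors as a function of \<theta> and the category totals, times a
  function of the counts alone (Fisher--Neyman factorization). The conditional pmf given
  the totals is then the normalized second factor, which is free of \<theta>.\<close>

lemma sufficient_statisticI_factorization:
  fixes g :: "'x \<Rightarrow> real"
  assumes "\<And>\<theta> y. \<theta> \<in> \<Theta> \<Longrightarrow> y \<in> X \<Longrightarrow> f \<theta> y = A \<theta> (T y) * g y"
  shows "sufficient_statistic f \<Theta> X T"
  unfolding sufficient_statistic_def
proof (intro exI[of _ "\<lambda>x. g x / infsum g {y\<in>X. T y = T x}"] ballI impI)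
  fix \<theta> x assume \<theta>: "\<theta> \<in> \<Theta>" and x: "x \<in> X"
    and pos: "(\<Sum>\<^sub>\<infinity>y\<in>{y\<in>X. T y = T x}. f \<theta> y) > 0"
  have "(\<Sum>\<^sub>\<infinity>y\<in>{y\<in>X. T y = T x}. f \<theta> y) = (\<Sum>\<^sub>\<infinity>y\<in>{y\<in>X. T y = T x}. A \<theta> (T x) * g y)"
    by (rule infsum_cong) (use assms \<theta> in auto)
  also have "\<dots> = A \<theta> (T x) * infsum g {y\<in>X. T y = T x}"
    by (rule infsum_cmult_right')
  finally have total: "(\<Sum>\<^sub>\<infinity>y\<in>{y\<in>X. T y = T x}. f \<theta> y) = A \<theta> (T x) * infsum g {y\<in>X. T y = T x}" .
  with pos have "A \<theta> (T x) \<noteq> 0" by auto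
  then show "f \<theta> x / (\<Sum>\<^sub>\<infinity>y\<in>{y\<in>X. T y = T x}. f \<theta> y) = g x / infsum g {y\<in>X. T y = T x}"
    using assms[OF \<theta> x] total by simp
qed

lemma rate_proportional:
  assumes "\<forall>i<I. a i j = c * a i k"
  shows "rate I a \<theta> j = c * rate I a \<theta> k"
  unfolding rate_def sum_distrib_left using assms by (intro sum.cong) auto

lemma prod_poisson_pmf_proportional_rates:
  fixes r c :: "'j \<Rightarrow> real" and n :: "'j \<Rightarrow> nat"
  assumes "finite C" and "\<And>j. j \<in> C \<Longrightarrow> r j = c j * \<mu>"
  shows "(\<Prod>j\<in>C. r j ^ n j * exp (- r j) / fact (n j))
       = \<mu> ^ (\<Sum>j\<in>C. n j) * exp (- (\<Sum>j\<in>C. r j)) * (\<Prod>j\<in>C. c j ^ n j / fact (n j))"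
proof -
  have "(\<Prod>j\<in>C. r j ^ n j * exp (- r j) / fact (n j))
      = (\<Prod>j\<in>C. \<mu> ^ n j * exp (- r j) * (c j ^ n j / fact (n j)))"
    using assms(2) by (intro prod.cong) (simp_all add: power_mult_distrib)
  also have "\<dots> = (\<Prod>j\<in>C. \<mu> ^ n j) * (\<Prod>j\<in>C. exp (- r j)) * (\<Prod>j\<in>C. c j ^ n j / fact (n j))"
    by (simp only: prod.distrib)
  also have "\<dots> = \<mu> ^ (\<Sum>j\<in>C. n j) * exp (- (\<Sum>j\<in>C. r j)) * (\<Prod>j\<in>C. c j ^ n j / fact (n j))"
    using assms(1) by (simp add: power_sum exp_sum[symmetric] sum_negf)
  finally show ?thesis .
qed

lemma collapsing_finite:
  assumes "collapsing I J a \<C>"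
  shows "finite \<C>" and "C \<in> \<C> \<Longrightarrow> finite C"
  using assms unfolding collapsing_def
  by (metis finite_UnionD finite_lessThan, metis Union_upper finite_lessThan finite_subset)

lemma poisson_model_prod_collapsing:
  assumes "collapsing I J a \<C>"
  shows "poisson_model I J a \<theta> n
       = (\<Prod>C\<in>\<C>. \<Prod>j\<in>C. rate I a \<theta> j ^ n j * exp (- rate I a \<theta> j) / fact (n j))"
proof -
  have "\<Union>\<C> = {..<J}" and "\<forall>C\<in>\<C>. \<forall>D\<in>\<C>. C \<noteq> D \<longrightarrow> C \<inter> D = {}"
    using assms by (simp_all add: collapsing_def)
  then show ?thesis
    unfolding poisson_model_def
    using prod.Union_disjoint[of \<C> "\<lambda>j. rate I a \<theta> j ^ n j * exp (- rate I a \<theta> j) / fact (n j)"]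
      collapsing_finite[OF assms]
    by (simp add: comp_def)
qed

lemma collapsing_obtains_scales:
  assumes "collapsing I J a \<C>"
  obtains rep :: "nat set \<Rightarrow> nat" and c :: "nat set \<Rightarrow> nat \<Rightarrow> real"
  where "\<And>C j. C \<in> \<C> \<Longrightarrow> j \<in> C \<Longrightarrow> \<forall>i<I. a i j = c C j * a i (rep C)"
proof
  define rep where "rep C = (SOME k. k \<in> C)" for C :: "nat set"
  fix C j assume C: "C \<in> \<C>" and j: "j \<in> C"
  have "rep C \<in> C"
    using assms C unfolding rep_def collapsing_def by (simp add: some_in_eq)
  moreover have "\<forall>j1\<in>C. \<forall>j2\<in>C. \<exists>c>0. \<forall>i<I. a i j1 = c * a i j2"
    using assms C by (simp add: collapsing_def)
  ultimately have "\<exists>c. \<forall>i<I. a i j = c * a i (rep C)"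
    using j by blast
  then show "\<forall>i<I. a i j = (SOME c. \<forall>i<I. a i j = c * a i (rep C)) * a i (rep C)"
    by (rule someI_ex)
qed

lemma poisson_model_factors_through_collapsed_counts:
  assumes "collapsing I J a \<C>"
  obtains A g where "\<And>\<theta> n. poisson_model I J a \<theta> n = A \<theta> (collapsed_counts \<C> n) * g n"
proof -
  obtain rep c where scales: "\<And>C j. C \<in> \<C> \<Longrightarrow> j \<in> C \<Longrightarrow> \<forall>i<I. a i j = c C j * a i (rep C)"
    using collapsing_obtains_scales[OF assms] by metis
  define A where "A \<theta> t = (\<Prod>C\<in>\<C>. rate I a \<theta> (rep C) ^ t C * exp (- (\<Sum>j\<in>C. rate I a \<theta> j)))"
    for \<theta> and t :: "nat set \<Rightarrow> nat"
  define g where "g n = (\<Prod>C\<in>\<C>. \<Prod>j\<in>C. c C j ^ n j / fact (n j))" for n :: "nat \<Rightarrow> nat"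
  have "poisson_model I J a \<theta> n = A \<theta> (collapsed_counts \<C> n) * g n" for \<theta> n
  proof -
    have "poisson_model I J a \<theta> n
        = (\<Prod>C\<in>\<C>. rate I a \<theta> (rep C) ^ (\<Sum>j\<in>C. n j) * exp (- (\<Sum>j\<in>C. rate I a \<theta> j))
                    * (\<Prod>j\<in>C. c C j ^ n j / fact (n j)))"
      unfolding poisson_model_prod_collapsing[OF assms]
    proof (rule prod.cong[OF refl])
      fix C assume C: "C \<in> \<C>"
      have "rate I a \<theta> j = c C j * rate I a \<theta> (rep C)" if "j \<in> C" for j
        using scales[OF C that] by (rule rate_proportional)
      with collapsing_finite(2)[OF assms C]
      show "(\<Prod>j\<in>C. rate I a \<theta> j ^ n j * exp (- rate I a \<theta> j) / fact (n j))
          = rate I a \<theta> (rep C) ^ (\<Sum>j\<in>C. n j) * exp (- (\<Sum>j\<in>C. rate I a \<theta> j))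
              * (\<Prod>j\<in>C. c C j ^ n j / fact (n j))"
        by (rule prod_poisson_pmf_proportional_rates)
    qed
    then show ?thesis
      unfolding A_def g_def collapsed_counts_def prod.distrib by simp
  qed
  then show ?thesis
    by (rule that)
qed

theorem proposition2:
  fixes I J :: nat and a :: "nat \<Rightarrow> nat \<Rightarrow> real" and \<C> :: "nat set set"
  assumes "0 < I" and "0 < J"
    and "\<forall>i<I. \<forall>j<J. 0 \<le> a i j"
    and "\<forall>j<J. \<exists>i<I. a i j \<noteq> 0"
    and "collapsing I J a \<C>"
  shows "sufficient_statistic (poisson_model I J a) (param_space I) (count_space_J J)
           (collapsed_counts \<C>)"
proof -
  obtain A g
    where factorization: "\<And>\<theta> n. poisson_model I J a \<theta> n = A \<theta> (collapsed_counts \<C> n) * g n"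
    using poisson_model_factors_through_collapsed_counts[OF assms(5)] by metis
  show ?thesis
    by (rule sufficient_statisticI_factorization) (rule factorization)
qed

end
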